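(* Let $G$ be a group acting on a set $X$. Let $A$ be a nonempty finite subset of $G$ and $Y$ a finite subset of $X$, and suppose $|A\cdot Y|\leq\alpha|A|$ for some $\alpha\in\mathbb{R}_{\geq0}$. Then there exists a nonempty subset $B\subset A$ such that $|CB\cdot Y|\leq\alpha|CB|$ for every finite subset $C$ of $G$.
   Context: $CB=\{cb\mid c\in C,b\in B\}$ and $S\cdot Y=\{s\cdot y\mid s\in S,y\in Y\}$. *)

theory Defs
  imports "HOL-Algebra.Group_Action" Complex_Main
begin

definition act_set :: "('a \<Rightarrow> 'b \<Rightarrow> 'b) \<Rightarrow> 'a set \<Rightarrow> 'b set \<Rightarrow> 'b set"
  where "act_set \<phi> S Y = {\<phi> s y | s y. s \<in> S \<and> y \<in> Y}"

end

theory Submission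
  imports Defs
begin

text \<open>
  Following Petridis, pick a nonempty \<open>B \<subseteq> A\<close> minimising the ratio
  \<open>K = |B\<cdot>Y| / |B|\<close>; then \<open>K \<le> |A\<cdot>Y| / |A| \<le> \<alpha>\<close>. The bound \<open>|CB\<cdot>Y| \<le> K |CB|\<close> is proved
  by induction on \<open>C\<close>. Adding an element \<open>c\<close> to \<open>C\<close> adds the translate \<open>cB\<close> to \<open>CB\<close>;
  the part \<open>Z = {b \<in> B. cb \<in> CB}\<close> of \<open>B\<close> contributes nothing new, so \<open>|CB|\<close> grows by
  exactly \<open>|B| - |Z|\<close>, while \<open>|CB\<cdot>Y|\<close> grows by at most \<open>|B\<cdot>Y| - |Z\<cdot>Y|\<close>, because
  \<open>c(Z\<cdot>Y)\<close> is already contained in \<open>CB\<cdot>Y\<close>. Minimality of \<open>B\<close> gives \<open>|Z\<cdot>Y| \<ge> K |Z|\<close>.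
\<close>

lemma act_set_eq_image: "act_set \<phi> S Y = (\<lambda>(s, y). \<phi> s y) ` (S \<times> Y)"
  unfolding act_set_def by auto

lemma finite_act_set: "finite S \<Longrightarrow> finite Y \<Longrightarrow> finite (act_set \<phi> S Y)"
  unfolding act_set_eq_image by simp

lemma act_set_mono: "S \<subseteq> T \<Longrightarrow> act_set \<phi> S Y \<subseteq> act_set \<phi> T Y"
  unfolding act_set_def by blast

lemma act_set_Un: "act_set \<phi> (S \<union> T) Y = act_set \<phi> S Y \<union> act_set \<phi> T Y"
  unfolding act_set_def by blast

lemma finite_set_mult: "finite C \<Longrightarrow> finite B \<Longrightarrow> finite (C <#>\<^bsub>G\<^esub> B)"
  unfolding set_mult_def by simp

lemma set_mult_insert: "insert c C <#>\<^bsub>G\<^esub> B = (C <#>\<^bsub>G\<^esub> B) \<union> (c <#\<^bsub>G\<^esub> B)"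
  unfolding set_mult_def l_coset_def by blast

lemma card_Un_image_add_card_preimage:
  assumes "finite D" "finite B" "inj_on f B"
  shows "card (D \<union> f ` B) + card {b \<in> B. f b \<in> D} = card D + card B"
proof -
  have "D \<inter> f ` B = f ` {b \<in> B. f b \<in> D}" by blast
  moreover have "card (f ` {b \<in> B. f b \<in> D}) = card {b \<in> B. f b \<in> D}"
    using assms(3) by (simp add: card_image inj_on_subset)
  ultimately show ?thesis
    using card_Un_Int[of D "f ` B"] assms by (simp add: card_image)
qed

lemma obtain_subset_minimising_ratio:
  fixes f :: "'a set \<Rightarrow> nat"
  assumes "finite A" "A \<noteq> {}"
  obtains B and K :: real where "B \<subseteq> A" "B \<noteq> {}" "K * card A \<le> f A" "f B = K * card B"
    "\<And>Z. Z \<subseteq> B \<Longrightarrow> K * card Z \<le> f Z"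
proof -
  define ratio where "ratio Z = real (f Z) / real (card Z)" for Z
  obtain B where B: "B \<in> {B. B \<subseteq> A \<and> B \<noteq> {}}"
    and B_min: "\<And>Z. Z \<in> {B. B \<subseteq> A \<and> B \<noteq> {}} \<Longrightarrow> ratio B \<le> ratio Z"
    using ex_is_arg_min_if_finite[of "{B. B \<subseteq> A \<and> B \<noteq> {}}" ratio] assms
    by (auto simp: is_arg_min_linorder)
  have ratio_le: "ratio B * card Z \<le> f Z" if "Z \<subseteq> A" for Z
  proof (cases "Z = {}")
    case False
    with that assms(1) have "card Z > 0"
      by (simp add: card_gt_0_iff finite_subset)
    with B_min[of Z] that False show ?thesis
      by (simp add: ratio_def le_divide_eq)
  qed simp
  show thesis
  proof (rule that)
    show "B \<subseteq> A" "B \<noteq> {}" using B by auto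
    show "ratio B * card A \<le> f A" using ratio_le by simp
    show "ratio B * card Z \<le> f Z" if "Z \<subseteq> B" for Z using ratio_le that \<open>B \<subseteq> A\<close> by blast
    have "card B > 0" using \<open>B \<subseteq> A\<close> \<open>B \<noteq> {}\<close> assms(1) by (simp add: card_gt_0_iff finite_subset)
    then show "f B = ratio B * card B" by (simp add: ratio_def)
  qed
qed

context group_action
begin

lemma is_group: "group G"
  using group_hom group_hom.axioms(1) by blast

lemma l_coset_eq_image: "c <# B = (\<lambda>b. c \<otimes> b) ` B"
  unfolding l_coset_def by blast

lemma card_Un_l_coset:
  assumes "c \<in> carrier G" "B \<subseteq> carrier G" "finite D" "finite B"
  shows "card (D \<union> (c <# B)) + card {b \<in> B. c \<otimes> b \<in> D} = card D + card B"
  unfolding l_coset_eq_image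
  using assms card_Un_image_add_card_preimage
    inj_on_subset[OF group.inj_on_cmult[OF is_group assms(1)] assms(2)]
  by blast

lemma act_set_l_coset:
  assumes "c \<in> carrier G" "B \<subseteq> carrier G" "Y \<subseteq> E"
  shows "act_set \<phi> (c <# B) Y = \<phi> c ` act_set \<phi> B Y"
proof -
  have "act_set \<phi> (c <# B) Y = (\<lambda>(b, y). \<phi> (c \<otimes> b) y) ` (B \<times> Y)"
    unfolding act_set_def l_coset_eq_image by (auto simp: image_iff)
  also have "\<dots> = (\<lambda>(b, y). \<phi> c (\<phi> b y)) ` (B \<times> Y)"
    using assms by (intro image_cong) (auto simp: composition_rule subset_iff)
  also have "\<dots> = \<phi> c ` act_set \<phi> B Y"
    by (simp add: act_set_eq_image image_image case_prod_unfold)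
  finally show ?thesis .
qed

lemma act_set_subset:
  assumes "S \<subseteq> carrier G" "Y \<subseteq> E"
  shows "act_set \<phi> S Y \<subseteq> E"
  unfolding act_set_def using assms element_image by blast

lemma card_act_set_Un_l_coset:
  assumes "c \<in> carrier G" "D \<subseteq> carrier G" "B \<subseteq> carrier G" "finite D" "finite B"
    and "Y \<subseteq> E" "finite Y"
  shows "card (act_set \<phi> (D \<union> (c <# B)) Y) + card (act_set \<phi> {b \<in> B. c \<otimes> b \<in> D} Y)
    \<le> card (act_set \<phi> D Y) + card (act_set \<phi> B Y)"
proof -
  let ?DY = "act_set \<phi> D Y" and ?BY = "act_set \<phi> B Y"
    and ?ZY = "act_set \<phi> {b \<in> B. c \<otimes> b \<in> D} Y"
  have fin: "finite ?DY" "finite (\<phi> c ` ?BY)"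
    using assms finite_act_set by blast+
  let ?cZ = "c <# {b \<in> B. c \<otimes> b \<in> D}"
  have "?cZ \<subseteq> D" "?cZ \<subseteq> c <# B"
    by (auto simp: l_coset_def)
  then have "act_set \<phi> ?cZ Y \<subseteq> ?DY" "act_set \<phi> ?cZ Y \<subseteq> \<phi> c ` ?BY"
    by (simp_all add: act_set_mono flip: act_set_l_coset[OF assms(1,3,6)])
  moreover have "act_set \<phi> ?cZ Y = \<phi> c ` ?ZY"
    by (rule act_set_l_coset) (use assms in auto)
  ultimately have ZY_sub: "\<phi> c ` ?ZY \<subseteq> ?DY \<inter> \<phi> c ` ?BY"
    by simp
  have "?ZY \<subseteq> E"
    by (rule act_set_subset) (use assms in auto)
  then have "inj_on (\<phi> c) ?ZY"
    by (rule inj_on_subset[OF inj_prop[OF assms(1)]])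
  then have "card ?ZY = card (\<phi> c ` ?ZY)"
    by (simp add: card_image)
  also have "\<dots> \<le> card (?DY \<inter> \<phi> c ` ?BY)"
    using ZY_sub fin by (simp add: card_mono)
  finally have "card ?ZY \<le> card (?DY \<inter> \<phi> c ` ?BY)" .
  moreover have "card (\<phi> c ` ?BY) \<le> card ?BY"
    using assms by (simp add: card_image_le finite_act_set)
  ultimately show ?thesis
    using card_Un_Int[OF fin] assms
    by (simp add: act_set_Un act_set_l_coset)
qed

lemma card_act_set_set_mult_le:
  fixes K :: real
  assumes B: "B \<subseteq> carrier G" "finite B" and Y: "Y \<subseteq> E" "finite Y"
    and B_le: "card (act_set \<phi> B Y) \<le> K * card B"
    and B_min: "\<And>Z. Z \<subseteq> B \<Longrightarrow> K * card Z \<le> card (act_set \<phi> Z Y)"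
    and C: "C \<subseteq> carrier G" "finite C"
  shows "card (act_set \<phi> (C <#> B) Y) \<le> K * card (C <#> B)"
  using C(2,1)
proof (induction C rule: finite_induct)
  case empty
  then show ?case by (simp add: set_mult_def act_set_def)
next
  case (insert c C)
  define D where "D = C <#> B"
  define Z where "Z = {b \<in> B. c \<otimes> b \<in> D}"
  have c: "c \<in> carrier G" and D: "D \<subseteq> carrier G" "finite D"
    using insert B finite_set_mult monoid.set_mult_closed[OF group.is_monoid[OF is_group]]
    by (auto simp: D_def)
  have card_step: "real (card (D \<union> (c <# B))) + real (card Z) = real (card D) + real (card B)"
    using card_Un_l_coset[OF c B(1) D(2) B(2)] unfolding Z_def
    by (simp only: of_nat_add[symmetric] of_nat_eq_iff)
  have act_step: "real (card (act_set \<phi> (D \<union> (c <# B)) Y)) + real (card (act_set \<phi> Z Y))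
      \<le> real (card (act_set \<phi> D Y)) + real (card (act_set \<phi> B Y))"
    using card_act_set_Un_l_coset[OF c D(1) B(1) D(2) B(2) Y] unfolding Z_def
    by (simp only: of_nat_add[symmetric] of_nat_le_iff)
  have "card (act_set \<phi> D Y) \<le> K * card D"
    using insert by (simp add: D_def)
  moreover have "K * card Z \<le> card (act_set \<phi> Z Y)"
    using B_min by (simp add: Z_def)
  moreover have "K * card (D \<union> (c <# B)) + K * card Z = K * card D + K * card B"
    by (simp only: distrib_left[symmetric] card_step)
  ultimately have "card (act_set \<phi> (D \<union> (c <# B)) Y) \<le> K * card (D \<union> (c <# B))"
    using act_step B_le by linarith
  then show ?case
    by (simp add: set_mult_insert D_def)
qed

end

theorem mainTheorem10:
  fixes G (structure) and X :: "'b set" and \<phi> :: "'a \<Rightarrow> 'b \<Rightarrow> 'b"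
    and A :: "'a set" and Y :: "'b set" and \<alpha> :: real
  assumes "group_action G X \<phi>"
    and "A \<subseteq> carrier G" and "A \<noteq> {}" and "finite A"
    and "Y \<subseteq> X" and "finite Y"
    and "\<alpha> \<ge> 0"
    and "real (card (act_set \<phi> A Y)) \<le> \<alpha> * real (card A)"
  shows "\<exists>B. B \<subseteq> A \<and> B \<noteq> {} \<and>
           (\<forall>C. C \<subseteq> carrier G \<and> finite C \<longrightarrow>
              real (card (act_set \<phi> (C <#> B) Y)) \<le> \<alpha> * real (card (C <#> B)))"
proof -
  interpret group_action G X \<phi> by fact
  obtain B and K :: real where B: "B \<subseteq> A" "B \<noteq> {}"
    and A_ge: "K * card A \<le> card (act_set \<phi> A Y)"
    and B_eq: "card (act_set \<phi> B Y) = K * card B"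
    and B_min: "\<And>Z. Z \<subseteq> B \<Longrightarrow> K * card Z \<le> card (act_set \<phi> Z Y)"
    using obtain_subset_minimising_ratio[OF assms(4,3), of "\<lambda>Z. card (act_set \<phi> Z Y)"] by blast
  have "card A > 0"
    using assms(3,4) by (simp add: card_gt_0_iff)
  moreover have "K * card A \<le> \<alpha> * card A"
    using A_ge assms(8) by linarith
  ultimately have "K \<le> \<alpha>"
    by (simp add: mult_le_cancel_right)
  have B_carrier: "B \<subseteq> carrier G" and B_finite: "finite B"
    using B(1) assms(2,4) finite_subset by auto
  show ?thesis
  proof (intro exI conjI allI impI)
    fix C assume C: "C \<subseteq> carrier G \<and> finite C"
    have "card (act_set \<phi> (C <#> B) Y) \<le> K * card (C <#> B)"
      using card_act_set_set_mult_le[OF B_carrier B_finite assms(5,6) B_eq[THEN eq_refl] B_min]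
        C by blast
    also have "\<dots> \<le> \<alpha> * card (C <#> B)"
      using \<open>K \<le> \<alpha>\<close> by (simp add: mult_right_mono)
    finally show "card (act_set \<phi> (C <#> B) Y) \<le> \<alpha> * card (C <#> B)" .
  qed (use B in auto)
qed

end
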